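(* Let $R$ be a type $(1,1)$ tensor on $E$ with $R(dt)=0$ and $\widetilde{R}$ its complete lift to $J^1\tau^*$. Then $\mathcal{L}_{\widetilde{X}}\widetilde{R}=\widetilde{\mathcal{L}_XR}$ for all $X\in\mathcal{X}^V(E)\cup\mathcal{X}^t(E)$, and $\mathcal{L}_{\alpha^v}\widetilde{R}=\big(-R\lrcorner_2\,d\alpha+d(R(\alpha))\big)^v$ for all 1-forms $\alpha$ on $E$.
   Context: Setting: $\tau:E\to\mathbb{R}$, $\dim E=n+1$, adapted coordinates $(t,q^i)$, allowed changes $t\mapsto t$, $q\mapsto Q(t,q)$; $J^1\tau^*=T^*E/\langle dt\rangle$, projection $\pi$, coordinates $(t,q^i,p_i)$ (class of $p_idq^i$). $\mathcal{X}^V(E)$: vector fields with $\langle X,dt\rangle=0$; $\mathcal{X}^t(E)$: vector fields with $\langle X,dt\rangle=1$. $(1,1)$ tensors act on 1-forms by $\langle R(X),\alpha\rangle=\langle X,R(\alpha)\rangle$. Note $(\mathcal{L}_XR)(dt)=0$ for $X\in\mathcal{X}^V(E)\cup\mathcal{X}^t(E)$. Vertical lift of a 1-form $\alpha=\alpha_0dt+\alpha_idq^i$: $\alpha^v=\alpha_i\partial_{p_i}$. Complete lift of $X=\varepsilon\partial_t+X^i\partial_{q^i}$, $\varepsilon\in\{0,1\}$: $\widetilde{X}=\varepsilon\partial_t+X^i\partial_{q^i}-p_j\frac{\partial X^j}{\partial q^i}\partial_{p_i}$. For a $(1,1)$ tensor $S$ on $E$ with $S(dt)=0$, $S^v=p_iS^i_j\partial_{p_j}$.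 Complete lift of $S=S^i_j\partial_{q^i}\otimes dq^j+S^i_0\partial_{q^i}\otimes dt$: the unique $(1,1)$ tensor $\widetilde{S}$ on $J^1\tau^*$ with $\widetilde{S}(\alpha^v)=(S(\alpha))^v$ for all 1-forms $\alpha$ and $\widetilde{S}(\widetilde{X})=\widetilde{S(X)}+(\mathcal{L}_XS)^v$ for all $X\in\mathcal{X}^V(E)\cup\mathcal{X}^t(E)$; in coordinates $\widetilde{S}=S^i_j(\partial_{q^i}\otimes dq^j+\partial_{p_j}\otimes dp_i)+S^i_0\partial_{q^i}\otimes dt+p_i(\frac{\partial S^i_j}{\partial q^k}-\frac{\partial S^i_k}{\partial q^j})\partial_{p_j}\otimes dq^k+p_i(\frac{\partial S^i_k}{\partial t}-\frac{\partial S^i_0}{\partial q^k})\partial_{p_k}\otimes dt$. For a 2-form $\omega$ on $E$, $R\lrcorner_2\,\omega$ denotes the covariant 2-tensor $(X,Y)\mapsto\omega(R(X),Y)$. For a covariant 2-tensor $\omega$ on $E$ (with $i_X\omega:=\omega(X,\cdot)$), its vertical lift $\omega^v$ is the $(1,1)$ tensor on $J^1\tau^*$ defined by $\omega^v(\alpha^v)=0$ for all 1-forms $\alpha$ and $\omega^v(\widetilde{X})=(i_X\omega)^v$ for all $X\in\mathcal{X}^V(E)\cup\mathcal{X}^t(E)$; for a 2-form $\omega=\tfrac12\omega_{ij}dq^i\wedge dq^j+\omega_{0i}dt\wedge dq^i$ this is $\omega^v=\omega_{ij}\partial_{p_j}\otimes dq^i+\omega_{0j}\partial_{p_j}\otimes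 dt$. *)

theory Defs
  imports "HOL-Analysis.Analysis"
begin

text \<open>Coordinate indices on E (adapted coordinates (t, q^i)) and on J^1 tau^*
  (coordinates (t, q^i, p_i)).  Points of E are pairs (t, q) with q :: real^'n,
  points of J^1 tau^* are triples (t, q, p).\<close>

datatype 'n eidx = ET | EQ 'n
datatype 'n jidx = JT | JQ 'n | JP 'n

lemma UNIV_eidx: "(UNIV :: 'n eidx set) = insert ET (range EQ)"
proof (rule set_eqI)
  fix x :: "'n eidx"
  show "x \<in> UNIV \<longleftrightarrow> x \<in> insert ET (range EQ)" by (cases x) simp_all
qed

lemma UNIV_jidx: "(UNIV :: 'n jidx set) = insert JT (range JQ \<union> range JP)"
proof (rule set_eqI)
  fix x :: "'n jidx"
  show "x \<in> UNIV \<longleftrightarrow> x \<in> insert JT (range JQ \<union> range JP)" by (cases x) simp_all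
qed

instance eidx :: (finite) finite
proof
  have "finite (insert ET (range (EQ :: 'a \<Rightarrow> 'a eidx)))" by simp
  then show "finite (UNIV :: 'a eidx set)" using UNIV_eidx by metis
qed

instance jidx :: (finite) finite
proof
  have "finite (insert JT (range (JQ :: 'a \<Rightarrow> 'a jidx) \<union> range JP))" by simp
  then show "finite (UNIV :: 'a jidx set)" using UNIV_jidx by metis
qed

definition pd :: "'p::real_normed_vector \<Rightarrow> ('p \<Rightarrow> real) \<Rightarrow> 'p \<Rightarrow> real" where
  "pd v f x = deriv (\<lambda>s. f (x + s *\<^sub>R v)) 0"

coinductive smoothf :: "('p::real_normed_vector \<Rightarrow> real) \<Rightarrow> bool" where
  "(\<forall>x. f differentiable (at x)) \<Longrightarrow> (\<forall>v. smoothf (pd v f)) \<Longrightarrow> smoothf f"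

text \<open>On a coordinate domain with points of type 'p and coordinate index type 'i,
  with b c the coordinate vector of the c-th coordinate:
  a vector field (or a 1-form) is given by its components 'i => 'p => real,
  a (1,1) tensor T by components T a c (coefficient of  d_a (x) dx^c), i.e.
  T(d_c) = sum_a T a c d_a; a covariant 2-tensor w by w a c = w(d_a, d_c).\<close>

definition bracket ::
  "('i::finite \<Rightarrow> 'p::real_normed_vector) \<Rightarrow> ('i \<Rightarrow> 'p \<Rightarrow> real) \<Rightarrow> ('i \<Rightarrow> 'p \<Rightarrow> real) \<Rightarrow> ('i \<Rightarrow> 'p \<Rightarrow> real)" where
  "bracket b X Y a x = (\<Sum>c\<in>UNIV. X c x * pd (b c) (Y a) x - Y c x * pd (b c) (X a) x)"

definition tact :: "('i::finite \<Rightarrow> 'i \<Rightarrow> 'p \<Rightarrow> real) \<Rightarrow> ('i \<Rightarrow> 'p \<Rightarrow> real) \<Rightarrow> ('i \<Rightarrow> 'p \<Rightarrow> real)" where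
  "tact T Y a x = (\<Sum>c\<in>UNIV. T a c x * Y c x)"

definition tform :: "('i::finite \<Rightarrow> 'i \<Rightarrow> 'p \<Rightarrow> real) \<Rightarrow> ('i \<Rightarrow> 'p \<Rightarrow> real) \<Rightarrow> ('i \<Rightarrow> 'p \<Rightarrow> real)" where
  "tform T \<alpha> c x = (\<Sum>a\<in>UNIV. \<alpha> a x * T a c x)"

definition coordvf :: "'i \<Rightarrow> 'i \<Rightarrow> 'p \<Rightarrow> real" where
  "coordvf c a x = (if a = c then 1 else 0)"

text \<open>Lie derivative of a (1,1) tensor: (L_X T)(Y) = [X, T Y] - T [X, Y],
  evaluated on the coordinate fields d_c.\<close>
definition lieT ::
  "('i::finite \<Rightarrow> 'p::real_normed_vector) \<Rightarrow> ('i \<Rightarrow> 'p \<Rightarrow> real) \<Rightarrow> ('i \<Rightarrow> 'i \<Rightarrow> 'p \<Rightarrow> real) \<Rightarrow> ('i \<Rightarrow> 'i \<Rightarrow> 'p \<Rightarrow> real)" where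
  "lieT b X T a c x = bracket b X (\<lambda>a'. T a' c) a x - tact T (bracket b X (coordvf c)) a x"

text \<open>Exterior derivative of a 1-form, as a covariant 2-tensor:
  d alpha (X, Y) = X(alpha Y) - Y(alpha X) - alpha [X, Y].\<close>
definition dform :: "('i::finite \<Rightarrow> 'p::real_normed_vector) \<Rightarrow> ('i \<Rightarrow> 'p \<Rightarrow> real) \<Rightarrow> ('i \<Rightarrow> 'i \<Rightarrow> 'p \<Rightarrow> real)" where
  "dform b \<alpha> a c x = pd (b a) (\<alpha> c) x - pd (b c) (\<alpha> a) x"

text \<open>R \<lrcorner>_2 w : (X, Y) |-> w(R X, Y).\<close>
definition contr2 :: "('i::finite \<Rightarrow> 'i \<Rightarrow> 'p \<Rightarrow> real) \<Rightarrow> ('i \<Rightarrow> 'i \<Rightarrow> 'p \<Rightarrow> real) \<Rightarrow> ('i \<Rightarrow> 'i \<Rightarrow> 'p \<Rightarrow> real)" where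
  "contr2 T \<omega> a c x = (\<Sum>d\<in>UNIV. T d a x * \<omega> d c x)"

fun bE :: "'n::finite eidx \<Rightarrow> real \<times> (real^'n)" where
  "bE ET = (1, 0)"
| "bE (EQ i) = (0, axis i 1)"

fun bJ :: "'n::finite jidx \<Rightarrow> real \<times> (real^'n) \<times> (real^'n)" where
  "bJ JT = (1, 0, 0)"
| "bJ (JQ i) = (0, axis i 1, 0)"
| "bJ (JP i) = (0, 0, axis i 1)"

definition dtE :: "'n eidx \<Rightarrow> real \<times> (real^'n) \<Rightarrow> real" where
  "dtE a x = (if a = ET then 1 else 0)"

definition piJ :: "real \<times> (real^'n) \<times> (real^'n) \<Rightarrow> real \<times> (real^'n)" where
  "piJ z = (fst z, fst (snd z))"

definition pJ :: "real \<times> (real^'n) \<times> (real^'n) \<Rightarrow> 'n \<Rightarrow> real" where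
  "pJ z i = snd (snd z) $ i"

text \<open>Vertical lift of a 1-form: alpha^v = alpha_i d_{p_i}.\<close>
fun vlift_form :: "('n::finite eidx \<Rightarrow> real \<times> (real^'n) \<Rightarrow> real) \<Rightarrow> 'n jidx \<Rightarrow> real \<times> (real^'n) \<times> (real^'n) \<Rightarrow> real" where
  "vlift_form \<alpha> (JP i) z = \<alpha> (EQ i) (piJ z)"
| "vlift_form \<alpha> (JQ i) z = 0"
| "vlift_form \<alpha> JT z = 0"

fun clift_vec :: "('n::finite eidx \<Rightarrow> real \<times> (real^'n) \<Rightarrow> real) \<Rightarrow> 'n jidx \<Rightarrow> real \<times> (real^'n) \<times> (real^'n) \<Rightarrow> real" where
  "clift_vec X JT z = X ET (piJ z)"
| "clift_vec X (JQ i) z = X (EQ i) (piJ z)"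
| "clift_vec X (JP i) z = - (\<Sum>j\<in>UNIV. pJ z j * pd (bE (EQ i)) (X (EQ j)) (piJ z))"

text \<open>Complete lift of a (1,1) tensor S with S(dt) = 0 (coordinate formula).
  First index: upper (vector) index, second: lower (form) index.\<close>
fun clift_tens :: "('n::finite eidx \<Rightarrow> 'n eidx \<Rightarrow> real \<times> (real^'n) \<Rightarrow> real) \<Rightarrow> 'n jidx \<Rightarrow> 'n jidx \<Rightarrow> real \<times> (real^'n) \<times> (real^'n) \<Rightarrow> real" where
  "clift_tens S (JQ i) (JQ j) z = S (EQ i) (EQ j) (piJ z)"
| "clift_tens S (JP j) (JP i) z = S (EQ i) (EQ j) (piJ z)"
| "clift_tens S (JQ i) JT z = S (EQ i) ET (piJ z)"
| "clift_tens S (JP j) (JQ k) z =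
     (\<Sum>i\<in>UNIV. pJ z i * (pd (bE (EQ k)) (S (EQ i) (EQ j)) (piJ z) - pd (bE (EQ j)) (S (EQ i) (EQ k)) (piJ z)))"
| "clift_tens S (JP k) JT z =
     (\<Sum>i\<in>UNIV. pJ z i * (pd (bE ET) (S (EQ i) (EQ k)) (piJ z) - pd (bE (EQ k)) (S (EQ i) ET) (piJ z)))"
| "clift_tens S (JQ i) (JP j) z = 0"
| "clift_tens S JT JT z = 0"
| "clift_tens S JT (JQ j) z = 0"
| "clift_tens S JT (JP j) z = 0"

text \<open>Vertical lift of a covariant 2-tensor w on E:
  w^v(alpha^v) = 0, w^v(X~) = (i_X w)^v, i.e.
  w^v = w(d_{q^i}, d_{q^j}) d_{p_j} (x) dq^i + w(d_t, d_{q^j}) d_{p_j} (x) dt.\<close>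
fun vlift_cov2 :: "('n::finite eidx \<Rightarrow> 'n eidx \<Rightarrow> real \<times> (real^'n) \<Rightarrow> real) \<Rightarrow> 'n jidx \<Rightarrow> 'n jidx \<Rightarrow> real \<times> (real^'n) \<times> (real^'n) \<Rightarrow> real" where
  "vlift_cov2 \<omega> (JP j) (JQ i) z = \<omega> (EQ i) (EQ j) (piJ z)"
| "vlift_cov2 \<omega> (JP j) JT z = \<omega> ET (EQ j) (piJ z)"
| "vlift_cov2 \<omega> (JP j) (JP i) z = 0"
| "vlift_cov2 \<omega> (JQ j) _ z = 0"
| "vlift_cov2 \<omega> JT _ z = 0"

end

theory Submission
  imports Defs
begin

text \<open>Both identities are checked componentwise in adapted coordinates (t, q, p). Every
  component involved is affine in the momenta p, with coefficients built from R, X or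
  \<alpha> and their partial derivatives along E, so after the product rule both sides
  become sums \<Sum> p_j c_j that are compared coefficient by coefficient. For the
  complete lift of X the coefficients agree only after second partial derivatives of X
  and R are symmetrised, which is where smoothness enters.\<close>

lemma has_real_derivative_along_line:
  assumes "(f has_derivative f') (at (x + s *\<^sub>R v))"
  shows "((\<lambda>s. f (x + s *\<^sub>R v)) has_real_derivative f' v) (at s)"
proof -
  have lin: "linear f'" using assms has_derivative_linear by blast
  have "((\<lambda>s. x + s *\<^sub>R v) has_derivative (\<lambda>t. t *\<^sub>R v)) (at s)"
    by (auto intro!: derivative_eq_intros)
  from has_derivative_compose[OF this assms]
  have "((\<lambda>s. f (x + s *\<^sub>R v)) has_derivative (\<lambda>t. f' (t *\<^sub>R v))) (at s)"
    by (simp add: o_def)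
  moreover have "(\<lambda>t. f' (t *\<^sub>R v)) = (\<lambda>t. t * f' v)"
    using linear_scale[OF lin] by auto
  ultimately show ?thesis by (simp add: has_field_derivative_def mult_commute_abs)
qed

lemma pd_eq_has_derivative:
  assumes "(f has_derivative f') (at y)"
  shows "pd v f y = f' v"
  unfolding pd_def
  using has_real_derivative_along_line[of f f' y 0 v] assms by (simp add: DERIV_imp_deriv)

lemma pd_eq_frechet_derivative:
  "f differentiable (at y) \<Longrightarrow> pd v f y = frechet_derivative f (at y) v"
  using frechet_derivative_works pd_eq_has_derivative by blast

lemma has_real_derivative_pd_along_line:
  assumes "f differentiable (at (x + s *\<^sub>R v))"
  shows "((\<lambda>s. f (x + s *\<^sub>R v)) has_real_derivative pd v f (x + s *\<^sub>R v)) (at s)"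
  using assms has_real_derivative_along_line pd_eq_frechet_derivative frechet_derivative_works
  by metis

lemma pd_const [simp]: "pd v (\<lambda>x. c) y = 0"
  unfolding pd_def by simp

lemma pd_zero [simp]: "pd 0 f y = 0"
  unfolding pd_def by simp

lemma pd_add:
  assumes "f differentiable (at y)" "g differentiable (at y)"
  shows "pd v (\<lambda>x. f x + g x) y = pd v f y + pd v g y"
  using assms
  by (simp add: pd_eq_frechet_derivative frechet_derivative_works
      pd_eq_has_derivative[OF has_derivative_add])

lemma pd_diff:
  assumes "f differentiable (at y)" "g differentiable (at y)"
  shows "pd v (\<lambda>x. f x - g x) y = pd v f y - pd v g y"
  using assms
  by (simp add: pd_eq_frechet_derivative frechet_derivative_works
      pd_eq_has_derivative[OF has_derivative_diff])

lemma pd_minus: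
  assumes "f differentiable (at y)"
  shows "pd v (\<lambda>x. - f x) y = - pd v f y"
  using assms
  by (simp add: pd_eq_frechet_derivative frechet_derivative_works
      pd_eq_has_derivative[OF has_derivative_minus])

lemma pd_mult:
  assumes "f differentiable (at y)" "g differentiable (at y)"
  shows "pd v (\<lambda>x. f x * g x) y = f y * pd v g y + pd v f y * g y"
  using assms
  by (simp add: pd_eq_frechet_derivative frechet_derivative_works
      pd_eq_has_derivative[OF has_derivative_mult])

lemma pd_sum:
  assumes "\<And>i. i \<in> A \<Longrightarrow> f i differentiable (at y)"
  shows "pd v (\<lambda>x. \<Sum>i\<in>A. f i x) y = (\<Sum>i\<in>A. pd v (f i) y)"
proof -
  have "\<And>i. i \<in> A \<Longrightarrow> (f i has_derivative frechet_derivative (f i) (at y)) (at y)"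
    using assms frechet_derivative_works by blast
  from pd_eq_has_derivative[OF has_derivative_sum[of A, OF this]]
  show ?thesis by (simp add: pd_eq_frechet_derivative assms)
qed

section \<open>Symmetry of second directional derivatives\<close>

lemma second_difference_mean_value:
  fixes f :: "'p::real_normed_vector \<Rightarrow> real"
  assumes df: "\<And>y. f differentiable (at y)" and h: "0 < h"
  obtains z where "0 < z" "z < h"
    "f (x + h *\<^sub>R v + h *\<^sub>R u) - f (x + h *\<^sub>R u) - f (x + h *\<^sub>R v) + f x
       = h * (pd u f (x + h *\<^sub>R v + z *\<^sub>R u) - pd u f (x + z *\<^sub>R u))"
proof -
  define g where "g s = f (x + h *\<^sub>R v + s *\<^sub>R u) - f (x + s *\<^sub>R u)" for s
  have g': "(g has_real_derivative pd u f (x + h *\<^sub>R v + s *\<^sub>R u) - pd u f (x + s *\<^sub>R u)) (at s)"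
    for s
    unfolding g_def by (intro DERIV_diff has_real_derivative_pd_along_line df)
  then have "continuous_on {0..h} g"
    by (meson DERIV_isCont continuous_at_imp_continuous_on)
  then obtain l z where z: "0 < z" "z < h" "DERIV g z :> l" "g h - g 0 = (h - 0) * l"
    using MVT[OF h, of g] g' real_differentiable_def by blast
  moreover have "l = pd u f (x + h *\<^sub>R v + z *\<^sub>R u) - pd u f (x + z *\<^sub>R u)"
    using DERIV_unique[OF z(3) g'] .
  ultimately show ?thesis
    using that unfolding g_def by (simp add: algebra_simps)
qed

lemma second_difference_quotient_tendsto:
  fixes f :: "'p::real_normed_vector \<Rightarrow> real"
  assumes df: "\<And>y. f differentiable (at y)" and dP: "pd u f differentiable (at x)"
  shows "((\<lambda>h. (f (x + h *\<^sub>R v + h *\<^sub>R u) - f (x + h *\<^sub>R u) - f (x + h *\<^sub>R v) + f x) / h\<^sup>2)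
          \<longlongrightarrow> pd v (pd u f) x) (at_right 0)"
proof -
  define P where "P = pd u f"
  obtain D where D: "(P has_derivative D) (at x)"
    using dP P_def differentiable_def by blast
  have lD: "linear D" using D has_derivative_linear by blast
  define K where "K = norm u + norm v + 1"
  have K: "K > 0" unfolding K_def by (smt (verit) norm_ge_zero)
  show ?thesis unfolding tendsto_iff P_def[symmetric] pd_eq_has_derivative[OF D]
  proof (intro allI impI)
    fix e :: real assume e: "e > 0"
    define e' where "e' = e / (4 * K)"
    have e': "e' > 0" using e K unfolding e'_def by auto
    obtain d where d: "d > 0"
      and dd: "\<And>y. norm (y - x) < d \<Longrightarrow> norm (P y - P x - D (y - x)) \<le> e' * norm (y - x)"
      using D e' unfolding has_derivative_at_alt by blast
    have "dist ((f (x + h *\<^sub>R v + h *\<^sub>R u) - f (x + h *\<^sub>R u) - f (x + h *\<^sub>R v) + f x) / h\<^sup>2) (D v) < e"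
      if h0: "0 < h" and hd: "h < d / K" for h
    proof -
      obtain z where z: "0 < z" "z < h"
        and mvt: "f (x + h *\<^sub>R v + h *\<^sub>R u) - f (x + h *\<^sub>R u) - f (x + h *\<^sub>R v) + f x
                    = h * (P (x + h *\<^sub>R v + z *\<^sub>R u) - P (x + z *\<^sub>R u))"
        using second_difference_mean_value[OF df h0] unfolding P_def by blast
      define y1 where "y1 = h *\<^sub>R v + z *\<^sub>R u"
      define y2 where "y2 = z *\<^sub>R u"
      have n1: "norm y1 \<le> h * K"
      proof -
        have "norm y1 \<le> h * norm v + z * norm u" unfolding y1_def
          using norm_triangle_ineq[of "h *\<^sub>R v" "z *\<^sub>R u"] h0 z by simp
        also have "\<dots> \<le> h * K"
          using z mult_right_mono[of z h "norm u"] unfolding K_def by (simp add: algebra_simps)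
        finally show ?thesis .
      qed
      have n2: "norm y2 \<le> h * K"
      proof -
        have "norm y2 \<le> h * norm u"
          using z mult_right_mono[of z h "norm u"] unfolding y2_def by simp
        also have "\<dots> \<le> h * K" unfolding K_def using h0 by simp
        finally show ?thesis .
      qed
      have hK: "h * K < d" using hd K by (simp add: field_simps)
      have b1: "norm (P (x + y1) - P x - D y1) \<le> e' * norm y1"
        using dd[of "x + y1"] n1 hK by simp
      have b2: "norm (P (x + y2) - P x - D y2) \<le> e' * norm y2"
        using dd[of "x + y2"] n2 hK by simp
      have "D y1 - D y2 = h * D v"
        unfolding y1_def y2_def using lD by (simp add: linear_add linear_scale)
      then have "P (x + y1) - P (x + y2) - h * D v
                   = (P (x + y1) - P x - D y1) - (P (x + y2) - P x - D y2)"
        by (simp add: algebra_simps)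
      then have "\<bar>P (x + y1) - P (x + y2) - h * D v\<bar> \<le> e' * norm y1 + e' * norm y2"
        using b1 b2 by (smt (verit) real_norm_def)
      also have "\<dots> \<le> e' * (h * K) + e' * (h * K)"
        using n1 n2 e' by (intro add_mono mult_left_mono) auto
      also have "\<dots> < h * e" unfolding e'_def using K h0 e by (simp add: field_simps)
      finally have "\<bar>P (x + y1) - P (x + y2) - h * D v\<bar> / h < e"
        using h0 by (simp add: divide_less_eq mult.commute)
      moreover have "h * (P (x + y1) - P (x + y2)) / h\<^sup>2 - D v = (P (x + y1) - P (x + y2) - h * D v) / h"
        using h0 by (simp add: power2_eq_square field_simps)
      ultimately show ?thesis
        using h0 unfolding mvt dist_real_def y1_def y2_def by (simp add: add.assoc)
    qed
    then show "\<forall>\<^sub>F h in at_right 0.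
      dist ((f (x + h *\<^sub>R v + h *\<^sub>R u) - f (x + h *\<^sub>R u) - f (x + h *\<^sub>R v) + f x) / h\<^sup>2) (D v) < e"
      using eventually_at_right_real[of 0 "d / K"] d K eventually_mono by force
  qed
qed

lemma pd_commute:
  fixes f :: "'p::real_normed_vector \<Rightarrow> real"
  assumes df: "\<And>y. f differentiable (at y)"
    and "pd u f differentiable (at x)" "pd v f differentiable (at x)"
  shows "pd u (pd v f) x = pd v (pd u f) x"
proof -
  \<comment> \<open>both sides are limits of the same second difference quotient, symmetric in u and v\<close>
  have "x + h *\<^sub>R u + h *\<^sub>R v = x + h *\<^sub>R v + h *\<^sub>R u" for h
    by (simp add: add_ac)
  then have "(\<lambda>h. (f (x + h *\<^sub>R u + h *\<^sub>R v) - f (x + h *\<^sub>R v) - f (x + h *\<^sub>R u) + f x) / h\<^sup>2)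
           = (\<lambda>h. (f (x + h *\<^sub>R v + h *\<^sub>R u) - f (x + h *\<^sub>R u) - f (x + h *\<^sub>R v) + f x) / h\<^sup>2)"
    by (simp add: algebra_simps)
  with second_difference_quotient_tendsto[OF df, of v x u] assms
  have "((\<lambda>h. (f (x + h *\<^sub>R v + h *\<^sub>R u) - f (x + h *\<^sub>R u) - f (x + h *\<^sub>R v) + f x) / h\<^sup>2)
          \<longlongrightarrow> pd u (pd v f) x) (at_right 0)"
    by simp
  from tendsto_unique[OF _ this second_difference_quotient_tendsto[OF df assms(2)]]
  show ?thesis by simp
qed

lemma smoothf_differentiable [simp]: "smoothf f \<Longrightarrow> f differentiable (at x)"
  by (subst (asm) smoothf.simps) blast

lemma smoothf_pd [simp]: "smoothf f \<Longrightarrow> smoothf (pd v f)"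
  by (subst (asm) smoothf.simps) blast

lemma smoothf_pd_commute: "smoothf f \<Longrightarrow> pd u (pd v f) x = pd v (pd u f) x"
  by (rule pd_commute) simp_all

lemma sum_UNIV_eidx:
  "(\<Sum>a\<in>UNIV. f a) = f ET + (\<Sum>i\<in>UNIV. f (EQ (i::'n::finite)))"
proof -
  have "(\<Sum>a\<in>UNIV. f a) = f ET + sum f (range (EQ :: 'n \<Rightarrow> 'n eidx))"
    by (simp add: UNIV_eidx sum.insert_if image_iff)
  also have "sum f (range EQ) = (\<Sum>i\<in>UNIV. f (EQ i))"
    by (subst sum.reindex) (auto simp: inj_def)
  finally show ?thesis .
qed

lemma sum_UNIV_jidx:
  "(\<Sum>a\<in>UNIV. f a) = f JT + (\<Sum>i\<in>UNIV. f (JQ (i::'n::finite))) + (\<Sum>i\<in>UNIV. f (JP i))"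
proof -
  have "(\<Sum>a\<in>UNIV. f a) = f JT + sum f (range (JQ :: 'n \<Rightarrow> 'n jidx) \<union> range JP)"
    by (simp add: UNIV_jidx sum.insert_if image_iff)
  also have "sum f (range JQ \<union> range JP) = sum f (range JQ) + sum f (range JP)"
    by (rule sum.union_disjoint) auto
  also have "sum f (range JQ) = (\<Sum>i\<in>UNIV. f (JQ i))"
    by (subst sum.reindex) (auto simp: inj_def)
  also have "sum f (range JP) = (\<Sum>i\<in>UNIV. f (JP i))"
    by (subst sum.reindex) (auto simp: inj_def)
  finally show ?thesis by (simp add: add.assoc)
qed

lemma has_derivative_piJ: "(piJ has_derivative piJ) (at z)"
  unfolding piJ_def by (auto intro!: derivative_eq_intros)

lemma differentiable_comp_piJ [simp]:
  "f differentiable (at (piJ z)) \<Longrightarrow> (\<lambda>z. f (piJ z)) differentiable (at z)"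
  using differentiable_compose[of f piJ z UNIV] has_derivative_piJ differentiable_def by blast

lemma differentiable_pJ [simp]: "(\<lambda>z. pJ z i) differentiable (at z)"
  unfolding pJ_def differentiable_def
  by (rule exI, rule bounded_linear_imp_has_derivative)
    (intro bounded_linear_compose[OF bounded_linear_vec_nth]
      bounded_linear_compose[OF bounded_linear_snd] bounded_linear_snd)

lemma pd_comp_piJ [simp]: "pd w (\<lambda>z. f (piJ z)) z = pd (piJ w) f (piJ z)"
  unfolding pd_def by (simp add: piJ_def)

lemma pd_pJ [simp]: "pd w (\<lambda>z. pJ z i) z = pJ w i"
  unfolding pd_def pJ_def
  by (rule DERIV_imp_deriv) (auto intro!: derivative_eq_intros)

lemma piJ_bJ [simp]: "piJ (bJ JT) = bE ET" "piJ (bJ (JQ i)) = bE (EQ i)" "piJ (bJ (JP i)) = 0"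
  by (simp_all add: piJ_def zero_prod_def)

lemma pJ_bJ [simp]:
  "pJ (bJ JT) j = 0" "pJ (bJ (JQ i)) j = 0" "pJ (bJ (JP i)) j = (if j = i then 1 else 0)"
  by (simp_all add: pJ_def axis_def)

section \<open>Lie derivatives of the lifted tensor\<close>

lemma bracket_coordvf: "bracket b X (coordvf c) a x = - pd (b c) (X a) x"
  unfolding bracket_def coordvf_def
  by (simp add: sum_negf if_distrib[where f = "\<lambda>u. u * w" for w] cong: if_cong)

lemma lieT_eq:
  "lieT b X T a c = (\<lambda>x. (\<Sum>d\<in>UNIV. X d x * pd (b d) (T a c) x)
     - (\<Sum>d\<in>UNIV. T d c x * pd (b d) (X a) x) + (\<Sum>d\<in>UNIV. T a d x * pd (b c) (X d) x))"
  unfolding lieT_def tact_def bracket_coordvf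
  by (simp add: fun_eq_iff bracket_def sum_subtractf sum_negf)

lemma tform_eq: "tform T \<alpha> c = (\<lambda>x. \<Sum>a\<in>UNIV. \<alpha> a x * T a c x)"
  by (simp add: fun_eq_iff tform_def)

lemma lieT_vlift_form_clift_tens:
  fixes R :: "'n::finite eidx \<Rightarrow> 'n eidx \<Rightarrow> real \<times> (real^'n) \<Rightarrow> real"
  assumes R: "\<forall>a c. smoothf (R a c)" and R_ET: "\<And>c x. R ET c x = 0"
    and \<alpha>: "\<forall>a. smoothf (\<alpha> a)"
  shows "lieT bJ (vlift_form \<alpha>) (clift_tens R) =
    vlift_cov2 (\<lambda>a c x. - contr2 R (dform bE \<alpha>) a c x + dform bE (tform R \<alpha>) a c x)"
  apply (intro ext)
  subgoal for A C z
    apply (cases A; cases C)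
    apply (simp_all add: lieT_eq sum_UNIV_jidx clift_tens.simps[abs_def] vlift_form.simps[abs_def]
        R \<alpha> pd_sum pd_mult pd_diff pd_add contr2_def dform_def tform_eq sum_UNIV_eidx R_ET
        if_distrib[where f = "\<lambda>u. u * w" for w]
        del: bJ.simps bE.simps cong: if_cong)
    apply (simp_all add: sum_subtractf sum.distrib algebra_simps)
    done
  done

text \<open>Rewriting into the normal form \<Sum> p_j c_j used to compare momentum coefficients.\<close>

lemma sum_mult_momenta_swap:
  "(\<Sum>i\<in>A. f i * (\<Sum>j\<in>B. pJ z j * g i j)) = (\<Sum>j\<in>B. pJ z j * (\<Sum>i\<in>A. f i * g i j))"
  by (simp add: sum_distrib_left mult.left_commute sum.swap[of _ A B])

lemma sum_momenta_swap:
  "(\<Sum>i\<in>A. \<Sum>j\<in>B. pJ z j * g i j) = (\<Sum>j\<in>B. pJ z j * (\<Sum>i\<in>A. g i j))"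
  by (simp add: sum_distrib_left sum.swap[of _ A B])

lemma momenta_mult_right: "(\<Sum>j\<in>B. pJ z j * g j) * c = (\<Sum>j\<in>B. pJ z j * (g j * c))"
  by (simp add: sum_distrib_right mult.assoc)

lemma momenta_mult_left: "c * (\<Sum>j\<in>B. pJ z j * g j) = (\<Sum>j\<in>B. pJ z j * (c * g j))"
  by (simp add: sum_distrib_left mult.left_commute)

lemma momenta_add:
  "(\<Sum>j\<in>B. pJ z j * f j) + (\<Sum>j\<in>B. pJ z j * g j) = (\<Sum>j\<in>B. pJ z j * (f j + g j))"
  by (simp add: sum.distrib distrib_left)

lemma momenta_diff:
  "(\<Sum>j\<in>B. pJ z j * f j) - (\<Sum>j\<in>B. pJ z j * g j) = (\<Sum>j\<in>B. pJ z j * (f j - g j))"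
  by (simp add: sum_subtractf right_diff_distrib)

lemma momenta_minus: "- (\<Sum>j\<in>B. pJ z j * f j) = (\<Sum>j\<in>B. pJ z j * (- f j))"
  by (simp add: sum_negf)

lemmas momenta_collect = sum_mult_momenta_swap sum_momenta_swap momenta_mult_right
  momenta_mult_left momenta_add momenta_diff momenta_minus

lemma momenta_coeff_cong:
  "(\<And>j. f j = g j) \<Longrightarrow> (\<Sum>j\<in>B. pJ z j * f j) = (\<Sum>j\<in>B. pJ z j * g j)"
  by simp

lemma lieT_clift_vec_clift_tens:
  fixes R :: "'n::finite eidx \<Rightarrow> 'n eidx \<Rightarrow> real \<times> (real^'n) \<Rightarrow> real"
  assumes R: "\<forall>a c. smoothf (R a c)" and R_ET: "\<And>c x. R ET c x = 0"
    and X: "\<forall>a. smoothf (X a)" and X_ET: "X ET = (\<lambda>x. \<epsilon>)"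
  shows "lieT bJ (clift_vec X) (clift_tens R) = clift_tens (lieT bE X R)"
  apply (intro ext)
  subgoal for A C z
    apply (cases A; cases C)
    apply (simp_all add: lieT_eq sum_UNIV_jidx sum_UNIV_eidx clift_tens.simps[abs_def]
        clift_vec.simps[abs_def] R X X_ET R_ET pd_sum pd_mult pd_diff pd_add pd_minus
        smoothf_pd_commute if_distrib[where f = "\<lambda>u. u * w" for w]
        del: bJ.simps bE.simps cong: if_cong)
    apply (simp_all only: sum.distrib sum_subtractf ring_distribs sum_negf)
    apply (simp_all only: momenta_collect)
    apply (auto intro!: momenta_coeff_cong simp: algebra_simps sum.distrib sum_subtractf
        simp del: bJ.simps bE.simps)
    done
  done

theorem proposition4:
  fixes R :: "'n::finite eidx \<Rightarrow> 'n eidx \<Rightarrow> real \<times> (real^'n) \<Rightarrow> real"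
  assumes R_smooth: "\<forall>a b. smoothf (R a b)"
    and R_dt: "tform R dtE = (\<lambda>b x. 0)"
  shows "(\<forall>X :: 'n eidx \<Rightarrow> real \<times> (real^'n) \<Rightarrow> real.
           (\<forall>a. smoothf (X a)) \<and> (X ET = (\<lambda>x. 0) \<or> X ET = (\<lambda>x. 1)) \<longrightarrow>
           lieT bJ (clift_vec X) (clift_tens R) = clift_tens (lieT bE X R)) \<and>
         (\<forall>\<alpha> :: 'n eidx \<Rightarrow> real \<times> (real^'n) \<Rightarrow> real.
           (\<forall>a. smoothf (\<alpha> a)) \<longrightarrow>
           lieT bJ (vlift_form \<alpha>) (clift_tens R) =
           vlift_cov2 (\<lambda>a c x. - contr2 R (dform bE \<alpha>) a c x + dform bE (tform R \<alpha>) a c x))"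
proof -
  have R_ET: "R ET c x = 0" for c x
    using fun_cong[OF fun_cong[OF R_dt, of c], of x] by (simp add: tform_def dtE_def sum_UNIV_eidx)
  have "lieT bJ (clift_vec X) (clift_tens R) = clift_tens (lieT bE X R)"
    if "\<forall>a. smoothf (X a)" and "X ET = (\<lambda>x. 0) \<or> X ET = (\<lambda>x. 1)" for X
    using that lieT_clift_vec_clift_tens[OF R_smooth R_ET] by blast
  moreover have "lieT bJ (vlift_form \<alpha>) (clift_tens R) =
      vlift_cov2 (\<lambda>a c x. - contr2 R (dform bE \<alpha>) a c x + dform bE (tform R \<alpha>) a c x)"
    if "\<forall>a. smoothf (\<alpha> a)" for \<alpha>
    using lieT_vlift_form_clift_tens[OF R_smooth R_ET that] .
  ultimately show ?thesis by blast
qed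

end
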